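(* If a $(v,[k_1,k_2,k_3],\lambda)$ Hadamard partitioned difference family exists, then no prime divisor of $(2k_1+1)(2k_2+1)(2k_3+1)$ is congruent to $5$ modulo $6$.
   Context: $G$ is a finite group of order $v$ written additively, with difference $x-y:=x+(-y)$. For $B\subseteq G$, $\Delta B$ is the multiset $\{x-y: x,y\in B, x\neq y\}$; for $\mathcal{F}=\{B_1,\dots,B_t\}$, $\Delta\mathcal{F}$ is the multiset union of the $\Delta B_i$. A $(v,[k_1,\dots,k_t],\lambda)$ partitioned difference family (PDF) is a collection $\{B_1,\dots,B_t\}$ of subsets partitioning some group $G$ of order $v$ with $|B_i|=k_i$ such that $\Delta\mathcal{F}$ contains every non-zero element of $G$ exactly $\lambda$ times. It is Hadamard (HPDF) if $v=2\lambda$. *)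

theory Defs
  imports "HOL-Library.Multiset" "HOL-Computational_Algebra.Primes"
begin

text \<open>The group G is the whole (finite) type 'a of class group_add (written additively,
not necessarily abelian); difference x - y = x + (- y).\<close>

definition delta :: "'a::group_add set \<Rightarrow> 'a multiset" where
  "delta B = image_mset (\<lambda>(x, y). x - y) (mset_set {(x, y). x \<in> B \<and> y \<in> B \<and> x \<noteq> y})"

definition Delta_fam :: "'a::group_add set list \<Rightarrow> 'a multiset" where
  "Delta_fam F = sum_list (map delta F)"

definition is_PDF :: "nat \<Rightarrow> nat list \<Rightarrow> nat \<Rightarrow> 'a::{group_add,finite} set list \<Rightarrow> bool" where
  "is_PDF v ks lam F \<longleftrightarrow>
     card (UNIV :: 'a set) = v \<and> length F = length ks \<and>
     (\<forall>i<length F. F ! i \<noteq> {} \<and> card (F ! i) = ks ! i) \<and>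
     (\<forall>i<length F. \<forall>j<length F. i \<noteq> j \<longrightarrow> F ! i \<inter> F ! j = {}) \<and>
     \<Union>(set F) = UNIV \<and>
     (\<forall>g. g \<noteq> 0 \<longrightarrow> count (Delta_fam F) g = lam)"

definition is_HPDF :: "nat \<Rightarrow> nat list \<Rightarrow> nat \<Rightarrow> 'a::{group_add,finite} set list \<Rightarrow> bool" where
  "is_HPDF v ks lam F \<longleftrightarrow> is_PDF v ks lam F \<and> v = 2 * lam"

end

theory Submission
  imports Defs "HOL-Number_Theory.Number_Theory"
begin

(* Counting the differences of a PDF with blocks of sizes k_i gives
   sum k_i (k_i - 1) = (v - 1) lam, and the blocks partition the group, so sum k_i = v.
   With v = 2 lam this becomes 2 sum k_i^2 = v^2 + v. For three blocks, putting
   x_i = 2 k_i + 1 turns it into (x_1 - x_2)^2 + 3 = x_3 (2 x_1 + 2 x_2 - x_3) and its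
   permutations, so every prime p dividing some x_i divides y^2 + 3 for some y.
   For odd p, writing y = 2 w + 1 mod p gives p | w^2 + w + 1, hence w^3 = 1 mod p. If p = 2 mod 3,
   Fermat's little theorem gives w = w^(p-1) = 1 mod p, so p divides 1 + 1 + 1, i.e. p = 3. *)

lemma size_delta:
  fixes B :: "'a::group_add set"
  assumes "finite B"
  shows "size (delta B) = card B * (card B - 1)"
proof -
  have "{(x, y). x \<in> B \<and> y \<in> B \<and> x \<noteq> y} = B \<times> B - (\<lambda>x. (x, x)) ` B"
    by auto
  moreover have "card ((\<lambda>x. (x, x)) ` B) = card B"
    by (rule card_image) (auto simp: inj_on_def)
  ultimately have "card {(x, y). x \<in> B \<and> y \<in> B \<and> x \<noteq> y} = card B * card B - card B"
    using assms by (simp add: card_Diff_subset card_cartesian_product finite_subset image_subset_iff)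
  then show ?thesis
    unfolding delta_def by (simp add: diff_mult_distrib2)
qed

lemma zero_not_in_delta: "0 \<notin># delta B"
  unfolding delta_def by (cases "finite {(x, y). x \<in> B \<and> y \<in> B \<and> x \<noteq> y}") auto

lemma size_Delta_fam: "size (Delta_fam F) = (\<Sum>B\<leftarrow>F. size (delta B))"
  unfolding Delta_fam_def by (induction F) simp_all

lemma size_eq_if_count_const_on_nonzero:
  fixes M :: "'a::{zero,finite} multiset"
  assumes "0 \<notin># M" and "\<And>g. g \<noteq> 0 \<Longrightarrow> count M g = lam"
  shows "size M = (card (UNIV :: 'a set) - 1) * lam"
proof -
  have "size M = (\<Sum>g\<in>set_mset M. count M g)"
    by (simp add: size_multiset_overloaded_eq)
  also have "\<dots> = (\<Sum>g\<in>UNIV - {0}. count M g)"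
    by (rule sum.mono_neutral_left) (use assms(1) in auto)
  also have "\<dots> = (card (UNIV :: 'a set) - 1) * lam"
    using assms(2) by (simp add: card_Diff_singleton)
  finally show ?thesis .
qed

lemma PDF_map_card:
  assumes "is_PDF v ks lam F"
  shows "map card F = ks"
  using assms unfolding is_PDF_def by (auto intro: nth_equalityI)

lemma PDF_order_eq_sum_list:
  assumes "is_PDF v ks lam F"
  shows "v = sum_list ks"
proof -
  have "(\<Union>i<length F. F ! i) = \<Union>(set F)"
    by (auto simp: in_set_conv_nth dest: nth_mem)
  then have "v = card (\<Union>i<length F. F ! i)"
    using assms unfolding is_PDF_def by simp
  also have "\<dots> = (\<Sum>i<length F. card (F ! i))"
    using assms unfolding is_PDF_def by (intro card_UN_disjoint) auto
  also have "\<dots> = sum_list (map card F)"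
    by (simp add: sum_list_sum_nth atLeast0LessThan)
  finally show ?thesis
    using PDF_map_card[OF assms] by simp
qed

lemma PDF_difference_count:
  fixes F :: "'a::{group_add,finite} set list"
  assumes "is_PDF v ks lam F"
  shows "(\<Sum>k\<leftarrow>ks. k * (k - 1)) = (v - 1) * lam"
proof -
  have "(\<Sum>k\<leftarrow>ks. k * (k - 1)) = size (Delta_fam F)"
    unfolding PDF_map_card[OF assms, symmetric] by (simp add: size_Delta_fam size_delta comp_def)
  also have "\<dots> = (card (UNIV :: 'a set) - 1) * lam"
    using assms unfolding is_PDF_def Delta_fam_def
    by (intro size_eq_if_count_const_on_nonzero) (auto simp: zero_not_in_delta)
  also have "\<dots> = (v - 1) * lam"
    using assms unfolding is_PDF_def by simp
  finally show ?thesis .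
qed

lemma HPDF_sum_list_squares:
  assumes "is_HPDF v ks lam F"
  shows "2 * (\<Sum>k\<leftarrow>ks. k\<^sup>2) = v\<^sup>2 + v"
proof -
  have pdf: "is_PDF v ks lam F" and v_eq: "v = 2 * lam"
    using assms unfolding is_HPDF_def by auto
  have "k\<^sup>2 = k * (k - 1) + k" for k :: nat
    by (cases k) (simp_all add: power2_eq_square)
  then have "(\<Sum>k\<leftarrow>ks. k\<^sup>2) = (\<Sum>k\<leftarrow>ks. k * (k - 1)) + sum_list ks"
    by (simp add: sum_list_addf)
  then have "2 * (\<Sum>k\<leftarrow>ks. k\<^sup>2) = (v - 1) * v + 2 * v"
    using PDF_difference_count[OF pdf] PDF_order_eq_sum_list[OF pdf] v_eq by simp
  moreover have "(v - 1) * v + 2 * v = v\<^sup>2 + v"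
    by (cases v) (simp_all add: power2_eq_square)
  ultimately show ?thesis
    by simp
qed

lemma cube_root_of_unity_cong_1:
  fixes p w :: nat
  assumes "prime p" and "[p = 2] (mod 3)" and "[w ^ 3 = 1] (mod p)"
  shows "[w = 1] (mod p)"
proof -
  have "\<not> p dvd w"
  proof
    assume "p dvd w"
    then have "p dvd w ^ 3"
      by (simp add: power3_eq_cube)
    then have "p dvd 1"
      using assms(3) cong_dvd_iff by blast
    then show False
      using assms(1) by simp
  qed
  then have "[w ^ (p - 1) = 1] (mod p)"
    using fermat_theorem assms(1) by blast
  moreover have "w ^ (p - 1) = (w ^ 3) ^ (p div 3) * w"
  proof -
    have "p - 1 = 3 * (p div 3) + 1"
      using div_mult_mod_eq[of p 3] assms(2) unfolding cong_def by simp
    then show ?thesis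
      by (simp add: power_add power_mult)
  qed
  moreover have "[(w ^ 3) ^ (p div 3) * w = w] (mod p)"
    using cong_mult[OF cong_pow[OF assms(3)] cong_refl[of w]] by simp
  ultimately show ?thesis
    by (metis cong_sym cong_trans)
qed

lemma prime_dvd_cyclotomic3:
  fixes p w :: nat
  assumes "prime p" and "p dvd w\<^sup>2 + w + 1"
  shows "p = 3 \<or> [p = 1] (mod 3)"
proof (rule ccontr)
  assume not_1: "\<not> (p = 3 \<or> [p = 1] (mod 3))"
  have prime_3: "prime (3 :: nat)"
    by simp
  have "p mod 3 \<noteq> 0"
    using not_1 assms(1) prime_3 primes_dvd_imp_eq by (metis dvd_eq_mod_eq_0)
  then have "[p = 2] (mod 3)"
    using not_1 unfolding cong_def by simp arith
  have "int w ^ 3 - 1 = (int w - 1) * int (w\<^sup>2 + w + 1)"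
    by (simp add: power2_eq_square power3_eq_cube algebra_simps)
  moreover have "int p dvd int (w\<^sup>2 + w + 1)"
    using assms(2) by (simp only: int_dvd_int_iff)
  ultimately have "int p dvd int w ^ 3 - 1"
    by (simp only: dvd_mult)
  then have "[w ^ 3 = 1] (mod p)"
    by (metis cong_iff_dvd_diff cong_int_iff of_nat_1 of_nat_power)
  then have w_1: "[w = 1] (mod p)"
    using cube_root_of_unity_cong_1 assms(1) \<open>[p = 2] (mod 3)\<close> by blast
  then have "[w\<^sup>2 + w + 1 = 3] (mod p)"
    using cong_add[OF cong_add[OF cong_pow[OF w_1, of 2] w_1] cong_refl[of 1]] by (simp add: numeral_3_eq_3)
  then have "p dvd 3"
    using assms(2) cong_dvd_iff by blast
  then show False
    using not_1 assms(1) prime_3 primes_dvd_imp_eq by blast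
qed

lemma prime_dvd_square_plus_3:
  fixes p :: nat and y :: int
  assumes "prime p" and "odd p" and "int p dvd y\<^sup>2 + 3"
  shows "p = 3 \<or> [p = 1] (mod 3)"
proof -
  obtain q where q: "p = 2 * q + 1"
    using assms(2) by (rule oddE)
  \<comment> \<open>q + 1 inverts 2 modulo p, so 2 w + 1 = y (mod p)\<close>
  define w where "w = nat ((y - 1) * (int q + 1) mod int p)"
  have "[2 * int w = (y - 1) * (int p + 1)] (mod int p)"
    using q unfolding w_def cong_def by (simp add: mod_mult_right_eq algebra_simps)
  also have "[(y - 1) * (int p + 1) = y - 1] (mod int p)"
    by (simp add: cong_iff_dvd_diff algebra_simps)
  finally have "[2 * int w + 1 = y] (mod int p)"
    by (metis cong_add_rcancel diff_add_cancel)
  then have "[(2 * int w + 1)\<^sup>2 + 3 = y\<^sup>2 + 3] (mod int p)"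
    by (intro cong_add cong_pow cong_refl)
  then have "int p dvd 4 * int (w\<^sup>2 + w + 1)"
    using assms(3) cong_dvd_iff by (fastforce simp: power2_eq_square algebra_simps)
  moreover have "coprime (int p) 4"
    using assms(2) coprime_mult_right_iff[of "int p" 2 2] by simp
  ultimately have "p dvd w\<^sup>2 + w + 1"
    using coprime_dvd_mult_right_iff int_dvd_int_iff by blast
  then show ?thesis
    using prime_dvd_cyclotomic3 assms(1) by blast
qed

lemma dvd_square_plus_3_if_sum_squares:
  fixes a b c :: int
  assumes "2 * (a\<^sup>2 + b\<^sup>2 + c\<^sup>2) = (a + b + c)\<^sup>2 + (a + b + c)"
  shows "2 * c + 1 dvd (2 * a - 2 * b)\<^sup>2 + 3"
proof
  show "(2 * a - 2 * b)\<^sup>2 + 3 = (2 * c + 1) * (4 * a + 4 * b - 2 * c + 3)"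
    using assms by (simp add: power2_eq_square algebra_simps)
qed

lemma dvd_square_plus_3_if_sum_squares_nat:
  fixes a b c k :: nat
  assumes "2 * (a\<^sup>2 + b\<^sup>2 + c\<^sup>2) = (a + b + c)\<^sup>2 + (a + b + c)" and "k \<in> {a, b, c}"
  shows "\<exists>y. int (2 * k + 1) dvd y\<^sup>2 + 3"
proof -
  have sq: "2 * ((int a)\<^sup>2 + (int b)\<^sup>2 + (int c)\<^sup>2) = (int a + int b + int c)\<^sup>2 + (int a + int b + int c)"
    using arg_cong[OF assms(1), of int] by simp
  have "2 * int a + 1 dvd (2 * int b - 2 * int c)\<^sup>2 + 3"
    "2 * int b + 1 dvd (2 * int a - 2 * int c)\<^sup>2 + 3"
    "2 * int c + 1 dvd (2 * int a - 2 * int b)\<^sup>2 + 3"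
    by (rule dvd_square_plus_3_if_sum_squares, use sq in \<open>simp add: algebra_simps\<close>)+
  then show ?thesis
    using assms(2) unfolding of_nat_add of_nat_mult of_nat_numeral of_nat_1 by blast
qed

theorem corollary3p3:
  fixes F :: "'a::{group_add,finite} set list"
    and v k1 k2 k3 lam :: nat
  assumes "is_HPDF v [k1, k2, k3] lam F"
  shows "\<forall>p::nat. prime p \<and> p dvd (2*k1+1)*(2*k2+1)*(2*k3+1) \<longrightarrow> p mod 6 \<noteq> 5"
proof (intro allI impI notI)
  fix p :: nat
  assume p: "prime p \<and> p dvd (2*k1+1)*(2*k2+1)*(2*k3+1)" and p_mod_6: "p mod 6 = 5"
  have "v = k1 + k2 + k3"
    using assms PDF_order_eq_sum_list unfolding is_HPDF_def by fastforce
  then have sq: "2 * (k1\<^sup>2 + k2\<^sup>2 + k3\<^sup>2) = (k1 + k2 + k3)\<^sup>2 + (k1 + k2 + k3)"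
    using HPDF_sum_list_squares[OF assms] by simp
  have "p dvd 2 * k1 + 1 \<or> p dvd 2 * k2 + 1 \<or> p dvd 2 * k3 + 1"
    using p prime_dvd_mult_iff by blast
  then obtain k where "k \<in> {k1, k2, k3}" and "p dvd 2 * k + 1"
    by blast
  then obtain y where "int p dvd y\<^sup>2 + 3"
    using dvd_square_plus_3_if_sum_squares_nat[OF sq] dvd_trans int_dvd_int_iff by metis
  moreover have "odd p"
    using p_mod_6 by presburger
  ultimately have "p = 3 \<or> [p = 1] (mod 3)"
    using prime_dvd_square_plus_3 p by blast
  moreover have "p mod 3 = 2"
    using mod_mod_cancel[of 3 6 p] p_mod_6 by simp
  ultimately show False
    unfolding cong_def by auto
qed

end
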